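(* For $\beta\in S^2$ and $\lambda\ge 0$ let $g_\beta^\lambda:S^2\to S^2$ be defined as below. Let $K,L\subset S^2$ be compact subsets such that $z\neq-\beta$ for all $(\beta,z)\in K\times L$, and let $\varepsilon>0$. Then there exists $\delta\in(0,1)$ such that \[|g_\beta^\lambda(z)-\beta|<\varepsilon\quad\text{for all }(\lambda,\beta,z)\in[0,\delta]\times K\times L.\]
   Context: $S^2$ is the unit sphere in $\mathbb R^3$ and $\langle\cdot,\cdot\rangle$ the Euclidean inner product. For $\beta\in S^2$ let $H_\beta=\{y\in\mathbb R^3:\langle y-\beta,\beta\rangle=0\}$ be the tangent plane at $\beta$, and let $\pi_\beta:H_\beta\cup\{\infty\}\to S^2$ be the stereographic projection $\pi_\beta(y)=\frac{4}{|\beta+y|^2}(\beta+y)-\beta$ for $y\in H_\beta$, $\pi_\beta(\infty)=-\beta$ (a homeomorphism). For $\lambda>0$ let $D_\beta^\lambda(y)=\beta+\lambda(y-\beta)$ on $H_\beta$, $D_\beta^\lambda(\infty)=\infty$, and set $g_\beta^\lambda=\pi_\beta^{-1}\circ D_\beta^\lambda\circ\pi_\beta$ (here $\pi_\beta^{-1}$ denotes the inverse of $\pi_\beta$, so $g_\beta^\lambda:S^2\to S^2$). For $\lambda=0$ set $g_\beta^0(z)=-\beta$ if $z=-\beta$ and $g_\beta^0(z)=\beta$ otherwise. *)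

theory Defs
  imports "HOL-Analysis.Analysis"
begin

type_synonym R3 = "real^3"

definition S2 :: "R3 set" where "S2 = sphere 0 1"

definition tplane :: "R3 \<Rightarrow> R3 set" where
  "tplane \<beta> = {y. inner (y - \<beta>) \<beta> = 0}"

text \<open>One-point compactification of the tangent plane: None stands for infinity.\<close>
definition tplane_ext :: "R3 \<Rightarrow> R3 option set" where
  "tplane_ext \<beta> = Some ` tplane \<beta> \<union> {None}"

definition stereo :: "R3 \<Rightarrow> R3 option \<Rightarrow> R3" where
  "stereo \<beta> p = (case p of None \<Rightarrow> - \<beta>
     | Some y \<Rightarrow> (4 / (norm (\<beta> + y))\<^sup>2) *\<^sub>R (\<beta> + y) - \<beta>)"

definition dil :: "R3 \<Rightarrow> real \<Rightarrow> R3 option \<Rightarrow> R3 option" where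
  "dil \<beta> lam p = (case p of None \<Rightarrow> None | Some y \<Rightarrow> Some (\<beta> + lam *\<^sub>R (y - \<beta>)))"

definition gmap :: "R3 \<Rightarrow> real \<Rightarrow> R3 \<Rightarrow> R3" where
  "gmap \<beta> lam z = (if lam = 0 then (if z = - \<beta> then - \<beta> else \<beta>)
     else stereo \<beta> (dil \<beta> lam (inv_into (tplane_ext \<beta>) (stereo \<beta>) z)))"

end

theory Submission
  imports Defs
begin

text \<open>For \<open>y\<close> in the tangent plane at \<open>\<beta>\<close> put \<open>s = 4 + |y - \<beta>|\<^sup>2 = |\<beta> + y|\<^sup>2\<close>. Then
  \<open>|\<pi>\<^sub>\<beta>(y) - \<beta>|\<^sup>2 = 4|y - \<beta>|\<^sup>2 / s \<le> |y - \<beta>|\<^sup>2\<close> and \<open>|\<pi>\<^sub>\<beta>(y) + \<beta>|\<^sup>2 = 16 / s\<close>.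
  Hence if \<open>z = \<pi>\<^sub>\<beta>(y)\<close>, then \<open>g\<^sub>\<beta>\<^sup>\<lambda>(z) = \<pi>\<^sub>\<beta>(\<beta> + \<lambda>(y - \<beta>))\<close> satisfies
  \<open>|g\<^sub>\<beta>\<^sup>\<lambda>(z) - \<beta>| \<le> \<lambda>|y - \<beta>| \<le> 4\<lambda> / |z + \<beta>|\<close>. Since \<open>L\<close> and \<open>-K\<close> are disjoint
  compact sets, \<open>|z + \<beta>| = dist z (-\<beta>)\<close> is bounded below by some \<open>m > 0\<close>, so \<open>\<delta> < \<epsilon>m/4\<close> works.\<close>

lemma inner_self_S2: "\<beta> \<in> S2 \<Longrightarrow> inner \<beta> \<beta> = 1"
  by (simp add: S2_def dot_square_norm)

lemma norm_add_tplane_sq: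
  assumes "\<beta> \<in> S2" "y \<in> tplane \<beta>"
  shows "norm (\<beta> + y) ^ 2 = 4 + norm (y - \<beta>) ^ 2"
proof -
  define v where "v = y - \<beta>"
  have "inner v \<beta> = 0" using assms(2) by (simp add: tplane_def v_def)
  moreover have "\<beta> + y = 2 *\<^sub>R \<beta> + v" by (simp add: v_def scaleR_2)
  ultimately show ?thesis using inner_self_S2[OF assms(1)]
    by (simp add: v_def[symmetric] power2_norm_eq_inner inner_add_left inner_add_right inner_commute)
qed

lemma norm_stereo_add_sq:
  assumes "\<beta> \<in> S2" "y \<in> tplane \<beta>"
  shows "norm (stereo \<beta> (Some y) + \<beta>) ^ 2 = 16 / (4 + norm (y - \<beta>) ^ 2)"
proof -
  define s where "s = 4 + norm (y - \<beta>) ^ 2"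
  have s: "norm (\<beta> + y) ^ 2 = s" "s > 0"
    using norm_add_tplane_sq[OF assms] by (simp_all add: s_def add_pos_nonneg)
  have "norm (stereo \<beta> (Some y) + \<beta>) = 4 / s * norm (\<beta> + y)"
    using s(2) by (simp add: stereo_def s(1))
  then have "norm (stereo \<beta> (Some y) + \<beta>) ^ 2 = (4 / s) ^ 2 * s"
    using s(1) by (simp add: power_divide power_mult_distrib)
  also have "\<dots> = 16 / s" using s(2) by (simp add: power2_eq_square)
  finally show ?thesis by (simp add: s_def)
qed

lemma norm_stereo_diff_sq:
  assumes "\<beta> \<in> S2" "y \<in> tplane \<beta>"
  shows "norm (stereo \<beta> (Some y) - \<beta>) ^ 2 = 4 * norm (y - \<beta>) ^ 2 / (4 + norm (y - \<beta>) ^ 2)"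
proof -
  define s where "s = 4 + norm (y - \<beta>) ^ 2"
  define u where "u = \<beta> + y"
  have s: "inner u u = s" "s > 0"
    using norm_add_tplane_sq[OF assms] by (simp_all add: u_def s_def add_pos_nonneg power2_norm_eq_inner)
  have bb: "inner \<beta> \<beta> = 1" by (rule inner_self_S2[OF assms(1)])
  have ub: "inner u \<beta> = 2"
    using assms(2) bb by (simp add: u_def tplane_def inner_add_left inner_diff_left)
  have "stereo \<beta> (Some y) - \<beta> = (4 / s) *\<^sub>R u - 2 *\<^sub>R \<beta>"
    using s by (simp add: stereo_def u_def[symmetric] power2_norm_eq_inner scaleR_2)
  moreover have "norm ((4 / s) *\<^sub>R u - 2 *\<^sub>R \<beta>) ^ 2 = (4 / s) ^ 2 * s - 16 / s * 2 + 4"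
    unfolding power2_norm_eq_inner using s ub bb
    by (simp add: inner_diff_left inner_diff_right inner_commute power2_eq_square)
  ultimately have "norm (stereo \<beta> (Some y) - \<beta>) ^ 2 = (4 / s) ^ 2 * s - 16 / s * 2 + 4"
    by simp
  also have "\<dots> = 4 * (s - 4) / s" using s by (simp add: power2_eq_square field_simps)
  finally show ?thesis by (simp add: s_def)
qed

lemma norm_stereo_diff_le:
  assumes "\<beta> \<in> S2" "y \<in> tplane \<beta>"
  shows "norm (stereo \<beta> (Some y) - \<beta>) \<le> norm (y - \<beta>)"
proof -
  have "4 * norm (y - \<beta>) ^ 2 / (4 + norm (y - \<beta>) ^ 2) \<le> norm (y - \<beta>) ^ 2"
    by (simp add: divide_le_eq add_pos_nonneg algebra_simps)
  then show ?thesis using norm_stereo_diff_sq[OF assms] by (simp add: power2_le_imp_le)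
qed

lemma norm_stereo_add_mult_le:
  assumes "\<beta> \<in> S2" "y \<in> tplane \<beta>"
  shows "norm (stereo \<beta> (Some y) + \<beta>) * norm (y - \<beta>) \<le> 4"
proof -
  have "(norm (stereo \<beta> (Some y) + \<beta>) * norm (y - \<beta>)) ^ 2 = 16 * norm (y - \<beta>) ^ 2 / (4 + norm (y - \<beta>) ^ 2)"
    using norm_stereo_add_sq[OF assms] by (simp add: power_mult_distrib)
  also have "\<dots> \<le> 4 ^ 2" by (simp add: divide_le_eq add_pos_nonneg)
  finally show ?thesis by (rule power2_le_imp_le) simp
qed

text \<open>The stereographic projection is inverted by its own formula.\<close>
lemma stereo_surj_tplane:
  assumes "\<beta> \<in> S2" "z \<in> S2" "z \<noteq> - \<beta>"
  shows "\<exists>y \<in> tplane \<beta>. stereo \<beta> (Some y) = z"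
proof -
  define u where "u = \<beta> + z"
  have "u \<noteq> 0" using assms(3) unfolding u_def by (metis add.commute neg_eq_iff_add_eq_0)
  then have u0: "inner u u > 0" by simp
  have uu: "inner u u = 2 * inner u \<beta>"
    using inner_self_S2[OF assms(1)] inner_self_S2[OF assms(2)]
    by (simp add: u_def inner_add_left inner_add_right inner_commute)
  define y where "y = (4 / inner u u) *\<^sub>R u - \<beta>"
  have "inner y \<beta> = 1"
    using uu u0 inner_self_S2[OF assms(1)] by (simp add: y_def inner_diff_left)
  then have "inner (y - \<beta>) \<beta> = 0"
    using inner_self_S2[OF assms(1)] by (simp add: inner_diff_left)
  moreover have "stereo \<beta> (Some y) = z"
  proof -
    have y: "\<beta> + y = (4 / inner u u) *\<^sub>R u" by (simp add: y_def)
    then have "norm (\<beta> + y) ^ 2 = 16 / inner u u"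
      unfolding power2_norm_eq_inner using u0 by (simp add: power2_eq_square)
    with y u0 show ?thesis by (simp add: stereo_def u_def)
  qed
  ultimately show ?thesis by (auto simp: tplane_def)
qed

lemma gmap_eq_stereo_dilation:
  assumes "\<beta> \<in> S2" "z \<in> S2" "z \<noteq> - \<beta>" "lam \<noteq> 0"
  obtains y where "y \<in> tplane \<beta>" "stereo \<beta> (Some y) = z"
    "gmap \<beta> lam z = stereo \<beta> (Some (\<beta> + lam *\<^sub>R (y - \<beta>)))"
proof -
  have "z \<in> stereo \<beta> ` tplane_ext \<beta>"
    using stereo_surj_tplane[OF assms(1-3)] by (force simp: tplane_ext_def)
  then have p: "inv_into (tplane_ext \<beta>) (stereo \<beta>) z \<in> tplane_ext \<beta>"
    "stereo \<beta> (inv_into (tplane_ext \<beta>) (stereo \<beta>) z) = z"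
    by (simp_all add: inv_into_into f_inv_into_f)
  moreover have "stereo \<beta> None \<noteq> z" using assms(3) by (simp add: stereo_def)
  ultimately obtain y where "y \<in> tplane \<beta>" "inv_into (tplane_ext \<beta>) (stereo \<beta>) z = Some y"
    by (force simp: tplane_ext_def)
  with p assms(4) show ?thesis by (intro that) (auto simp: gmap_def dil_def)
qed

lemma norm_gmap_diff_mult_le:
  assumes "\<beta> \<in> S2" "z \<in> S2" "z \<noteq> - \<beta>" "lam \<ge> 0"
  shows "norm (gmap \<beta> lam z - \<beta>) * norm (z + \<beta>) \<le> 4 * lam"
proof (cases "lam = 0")
  case True
  then show ?thesis using assms(3) by (simp add: gmap_def)
next
  case False
  then obtain y where y: "y \<in> tplane \<beta>" "stereo \<beta> (Some y) = z"
    and g: "gmap \<beta> lam z = stereo \<beta> (Some (\<beta> + lam *\<^sub>R (y - \<beta>)))"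
    using gmap_eq_stereo_dilation[OF assms(1-3)] by blast
  have "\<beta> + lam *\<^sub>R (y - \<beta>) \<in> tplane \<beta>" using y(1) by (simp add: tplane_def)
  then have "norm (gmap \<beta> lam z - \<beta>) \<le> lam * norm (y - \<beta>)"
    using norm_stereo_diff_le[OF assms(1)] g assms(4) by fastforce
  then have "norm (gmap \<beta> lam z - \<beta>) * norm (z + \<beta>) \<le> lam * (norm (z + \<beta>) * norm (y - \<beta>))"
    by (metis mult.assoc mult.commute mult_right_mono norm_ge_zero)
  also have "\<dots> \<le> lam * 4"
    using norm_stereo_add_mult_le[OF assms(1) y(1)] y(2) assms(4) by (simp add: mult_left_mono)
  finally show ?thesis by simp
qed

theorem lemma3p6:
  fixes K L :: "R3 set" and \<epsilon> :: real
  assumes "compact K" "K \<subseteq> S2" "compact L" "L \<subseteq> S2"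
    and "\<forall>\<beta>\<in>K. \<forall>z\<in>L. z \<noteq> - \<beta>"
    and "\<epsilon> > 0"
  shows "\<exists>\<delta>. 0 < \<delta> \<and> \<delta> < 1 \<and>
    (\<forall>lam\<in>{0..\<delta>}. \<forall>\<beta>\<in>K. \<forall>z\<in>L. norm (gmap \<beta> lam z - \<beta>) < \<epsilon>)"
proof -
  have "closed (uminus ` K)" using assms(1) by (simp add: compact_imp_closed compact_negations)
  moreover have "L \<inter> uminus ` K = {}" using assms(5) by force
  ultimately obtain m where m: "m > 0" and "\<forall>z\<in>L. \<forall>w\<in>uminus ` K. m \<le> dist z w"
    using separate_compact_closed[OF assms(3)] by blast
  then have m_le: "m \<le> norm (z + \<beta>)" if "\<beta> \<in> K" "z \<in> L" for \<beta> z
    using that by (force simp: dist_norm)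
  define \<delta> where "\<delta> = min (1/2) (\<epsilon> * m / 8)"
  have "0 < \<delta>" "\<delta> < 1" using m assms(6) by (simp_all add: \<delta>_def)
  moreover have "norm (gmap \<beta> lam z - \<beta>) < \<epsilon>" if "lam \<in> {0..\<delta>}" "\<beta> \<in> K" "z \<in> L" for lam \<beta> z
  proof -
    have "norm (gmap \<beta> lam z - \<beta>) * m \<le> norm (gmap \<beta> lam z - \<beta>) * norm (z + \<beta>)"
      using m_le[OF that(2,3)] by (simp add: mult_left_mono)
    also have "\<dots> \<le> 4 * lam"
      using that assms(2,4,5) by (intro norm_gmap_diff_mult_le) auto
    also have "\<dots> < \<epsilon> * m" using that(1) mult_pos_pos[OF assms(6) m] by (simp add: \<delta>_def)
    finally show ?thesis using m by simp
  qed
  ultimately show ?thesis by blast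
qed

end
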